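(* Let $n_1,m_1,n_2,m_2\in\mathbb{N}$, $c\in\mathbb{R}^{n_1}$, $A\in\mathbb{R}^{m_1\times n_1}$, $b\in\mathbb{R}^{m_1}$. Let $\boldsymbol{\xi}$ be a random vector taking values in a finite set $\mathcal{S}$ of scenarios with probabilities $\mathbb{P}(\xi)$, and for each $\xi\in\mathcal{S}$ let $q(\xi)\in\mathbb{R}^{n_2}$, $T(\xi)\in\mathbb{R}^{m_2\times n_1}$, $W(\xi)\in\mathbb{R}^{m_2\times n_2}$, $h(\xi)\in\mathbb{R}^{m_2}$. For $x\in\mathbb{R}^{n_1}$ and $\xi\in\mathcal{S}$ let $$Q(x,\xi)=\max\{\langle q(\xi),y\rangle:\ T(\xi)x+W(\xi)y\le h(\xi),\ y\ge 0,\ y\in\mathbb{R}^{n_2}\},$$ and let $$z^*=\max\{\langle c,x\rangle+\mathbb{E}_{\boldsymbol{\xi}}[Q(x,\boldsymbol{\xi})]:\ Ax\le b,\ x\ge 0\}$$ be the optimal objective value of the two-stage stochastic program. Let $R=\max\{\|x\|_2: Ax\le b,\ x\ge 0\}$, let $\tilde x$ be an optimal solution of $\max\{\langle c,x\rangle: Ax\le b,\ x\ge 0\}$, and for $\tau\ge 0$ let $\tilde x_\tau$ denote the solution of the convex problem $$\max\{\langle c,x_\tau\rangle:\ Ax_\tau\le b,\ \|x_\tau\|_2\le\tau,\ x_\tau\ge 0\}. \qquad (\ast)$$ Let $\varepsilon>0$ and assume all of the following: (a) the set $\{x: Ax\le b,\ x\ge 0\}$ is nonempty and bounded, and for each $\tau\ge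 0$ problem $(\ast)$ is feasible and has a unique solution; (b) for every $\xi\in\mathcal{S}$ and every $x\in\mathbb{R}^{n_1}$ with $\|x\|_2\le R$, the linear program defining $Q(x,\xi)$ is feasible and bounded; (c) for every $x\in\mathbb{R}^{n_1}$ with $\|x\|_2\le R$, $\big|\mathbb{E}_{\boldsymbol{\xi}}Q(x,\boldsymbol{\xi})-\mathbb{E}_{\boldsymbol{\xi}}Q((\|x\|_2,0,\dots,0)^\top,\boldsymbol{\xi})\big|\le\varepsilon$; (d) whenever $\|\tilde x\|_2\le\tau_1\le\tau_2\le R$, $\mathbb{E}_{\boldsymbol{\xi}}[Q((\tau_1,0,\dots,0)^\top,\boldsymbol{\xi})]\ge\mathbb{E}_{\boldsymbol{\xi}}[Q((\tau_2,0,\dots,0)^\top,\boldsymbol{\xi})]-\varepsilon$. Define $$\hat z^*=\max\Big\{\langle c,\tilde x_\tau\rangle+\mathbb{E}_{\boldsymbol{\xi}}[Q((\|\tilde x_\tau\|_2,0,\dots,0)^\top,\boldsymbol{\xi})]:\ 0\le\tau\le R\Big\}.$$ Then $|z^*-\hat z^*|\le 2\varepsilon$.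
   Context: $\mathbb{E}_{\boldsymbol{\xi}}[f(\boldsymbol{\xi})]=\sum_{\xi\in\mathcal{S}}\mathbb{P}(\xi)f(\xi)$. Vector inequalities are componentwise. $(t,0,\dots,0)^\top\in\mathbb{R}^{n_1}$ denotes $t$ times the first standard basis vector. Condition (c) is called approximate rotational invariance and (d) approximate monotonicity in the paper. *)

theory Defs
  imports "HOL-Analysis.Analysis"
begin

definition expect :: "'s set \<Rightarrow> ('s \<Rightarrow> real) \<Rightarrow> ('s \<Rightarrow> real) \<Rightarrow> real" where
  "expect S P f = (\<Sum>\<xi>\<in>S. P \<xi> * f \<xi>)"

text \<open>Second-stage value Q(x,xi) = max { q.y : T x + W y <= h, y >= 0 } (the maximum,
  when attained, equals the supremum).\<close>
definition Qval :: "real^'n2 \<Rightarrow> real^'n1^'m2 \<Rightarrow> real^'n2^'m2 \<Rightarrow> real^'m2 \<Rightarrow> real^'n1 \<Rightarrow> real" where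
  "Qval q T W h x = Sup {q \<bullet> y | y. T *v x + W *v y \<le> h \<and> 0 \<le> y}"

definition EQv :: "'s set \<Rightarrow> ('s \<Rightarrow> real) \<Rightarrow> ('s \<Rightarrow> real^'n2) \<Rightarrow> ('s \<Rightarrow> real^'n1^'m2)
   \<Rightarrow> ('s \<Rightarrow> real^'n2^'m2) \<Rightarrow> ('s \<Rightarrow> real^'m2) \<Rightarrow> real^'n1 \<Rightarrow> real" where
  "EQv S P q T W h x = expect S P (\<lambda>\<xi>. Qval (q \<xi>) (T \<xi>) (W \<xi>) (h \<xi>) x)"

text \<open>The vector (t,0,...,0): t times the first standard basis vector (first index w.r.t.
  the well-order of the index type).\<close>
definition e1 :: "real \<Rightarrow> real^'n::{finite,wellorder}" where
  "e1 t = axis (LEAST i::'n. True) t"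

definition feas :: "real^'n^'m \<Rightarrow> real^'m \<Rightarrow> (real^'n) set" where
  "feas A b = {x. A *v x \<le> b \<and> 0 \<le> x}"

definition is_opt_tau :: "real^'n \<Rightarrow> real^'n^'m \<Rightarrow> real^'m \<Rightarrow> real \<Rightarrow> real^'n \<Rightarrow> bool" where
  "is_opt_tau c A b \<tau> x \<longleftrightarrow> x \<in> feas A b \<and> norm x \<le> \<tau> \<and>
     (\<forall>x'. x' \<in> feas A b \<and> norm x' \<le> \<tau> \<longrightarrow> c \<bullet> x' \<le> c \<bullet> x)"

definition xtau :: "real^'n \<Rightarrow> real^'n^'m \<Rightarrow> real^'m \<Rightarrow> real \<Rightarrow> real^'n" where
  "xtau c A b \<tau> = (THE x. is_opt_tau c A b \<tau> x)"

end

theory Submission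
  imports Defs
begin

(*
  Replacing EQ(x) by EQ((|x|,0,...,0)) costs at most \<epsilon> by approximate rotational invariance,
  and among first-stage points of norm at most \<tau> the restricted optimum x_\<tau> has the largest
  first-stage objective. If \<tau> < |x~|, then |x_\<tau>| = \<tau>: a restricted optimum with slack in the
  norm bound maximises the linear objective over the whole polytope, hence would be a second
  solution of the problem with bound |x~|. If \<tau> \<ge> |x~|, then x_\<tau> = x~ and approximate
  monotonicity costs another \<epsilon>. This gives z* \<le> z^ + 2\<epsilon>, and z^ \<le> z* + \<epsilon> by rotational
  invariance alone. Both suprema are finite since an LP value is concave in the right-hand
  side, so the expected recourse is concave along the segment {(t,0,...,0) : |t| \<le> R} and
  therefore bounded above on it.
*)

lemma cSup_weighted_add_le:
  fixes X Y :: "real set"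
  assumes "X \<noteq> {}" "Y \<noteq> {}" "0 < u" "0 < v"
    and "\<And>x y. x \<in> X \<Longrightarrow> y \<in> Y \<Longrightarrow> u * x + v * y \<le> c"
  shows "u * Sup X + v * Sup Y \<le> c"
proof -
  have "Sup X \<le> (c - v * y) / u" if "y \<in> Y" for y
  proof (rule cSup_least)
    show "x \<le> (c - v * y) / u" if "x \<in> X" for x
      using assms(3) assms(5)[OF that \<open>y \<in> Y\<close>] by (simp add: pos_le_divide_eq algebra_simps)
  qed (rule assms(1))
  then have "Sup Y \<le> (c - u * Sup X) / v"
    using assms(2,3,4) by (intro cSup_least) (simp_all add: pos_le_divide_eq pos_divide_le_eq algebra_simps)
  then show ?thesis
    using assms by (simp add: field_simps)
qed

lemma bdd_above_dominated:
  fixes X Y :: "'a::ordered_ab_group_add set"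
  assumes "bdd_above X" and "\<And>y. y \<in> Y \<Longrightarrow> \<exists>x\<in>X. y \<le> x + a"
  shows "bdd_above Y"
proof -
  obtain M where "\<And>x. x \<in> X \<Longrightarrow> x \<le> M"
    using assms(1) by (auto simp: bdd_above_def)
  then have "y \<le> M + a" if "y \<in> Y" for y
    using assms(2)[OF that] by (meson add_right_mono order_trans)
  then show ?thesis
    by (rule bdd_aboveI)
qed

lemma cSup_le_cSup_add:
  fixes X Y :: "'a::{conditionally_complete_linorder,ordered_ab_group_add} set"
  assumes "Y \<noteq> {}" "bdd_above X" and "\<And>y. y \<in> Y \<Longrightarrow> \<exists>x\<in>X. y \<le> x + a"
  shows "Sup Y \<le> Sup X + a"
proof (rule cSup_least[OF assms(1)])
  fix y
  assume "y \<in> Y"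
  then obtain x where "x \<in> X" "y \<le> x + a"
    using assms(3) by blast
  moreover have "x \<le> Sup X"
    using cSup_upper[OF \<open>x \<in> X\<close> assms(2)] .
  ultimately show "y \<le> Sup X + a"
    by (meson add_right_mono order_trans)
qed

lemma abs_cSup_diff_le:
  fixes X Y :: "real set"
  assumes "X \<noteq> {}" "Y \<noteq> {}" "bdd_above X" "0 \<le> a" "a \<le> b"
    and "\<And>y. y \<in> Y \<Longrightarrow> \<exists>x\<in>X. y \<le> x + a"
    and "\<And>x. x \<in> X \<Longrightarrow> \<exists>y\<in>Y. x \<le> y + b"
  shows "\<bar>Sup X - Sup Y\<bar> \<le> b"
proof -
  have "Sup Y \<le> Sup X + a"
    using assms(2,3,6) by (rule cSup_le_cSup_add)
  moreover have "Sup X \<le> Sup Y + b"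
    using assms(1) bdd_above_dominated[OF assms(3,6)] assms(7) by (rule cSup_le_cSup_add)
  ultimately show ?thesis
    using assms(4,5) by (simp add: abs_le_iff)
qed

lemma concave_on_sum_weighted:
  assumes "convex D" and "\<And>i. i \<in> I \<Longrightarrow> 0 \<le> a i"
    and "\<And>i. i \<in> I \<Longrightarrow> concave_on D (f i)"
  shows "concave_on D (\<lambda>x. \<Sum>i\<in>I. a i * f i x)"
proof (cases "finite I")
  case True
  then show ?thesis
    using assms(2,3)
    by (induction I rule: finite_induct)
      (auto simp: concave_on_const \<open>convex D\<close> intro!: concave_on_add concave_on_cmul)
qed (simp add: concave_on_const \<open>convex D\<close>)

lemma concave_on_compose_linear:
  assumes "linear L" "concave_on D f" "convex S" "L ` S \<subseteq> D"
  shows "concave_on S (\<lambda>x. f (L x))"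
  using assms
  by (fastforce simp: concave_on_iff linear_add linear_scale image_subset_iff)

lemma concave_on_Icc_le:
  fixes g :: "real \<Rightarrow> real"
  assumes "concave_on {a..b} g" "s \<in> {a..b}"
  shows "g s \<le> 2 * g ((a + b) / 2) - min (g a) (g b)"
proof -
  have reflected: "a + b - s \<in> {a..b}"
    using assms(2) by auto
  have mid: "(1 - 1/2) *\<^sub>R s + (1/2) *\<^sub>R (a + b - s) = (a + b) / 2"
    by (simp add: field_simps)
  have "min (g a) (g b) \<le> g (a + b - s)"
    using concave_on_ge_min[OF assms(1) reflected] .
  moreover have "g s + g (a + b - s) \<le> 2 * g ((a + b) / 2)"
    using concave_onD[OF assms(1), of "1/2" s "a + b - s", unfolded mid] assms(2) reflected
    by simp
  ultimately show ?thesis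
    by linarith
qed

lemma inner_le_if_maximal_with_slack_norm:
  fixes c :: "'a::real_inner"
  assumes "convex F" "u \<in> F" "norm u < \<tau>"
    and maximal: "\<And>x. x \<in> F \<Longrightarrow> norm x \<le> \<tau> \<Longrightarrow> c \<bullet> x \<le> c \<bullet> u"
    and "x \<in> F"
  shows "c \<bullet> x \<le> c \<bullet> u"
proof -
  have d: "0 < norm (x - u) + 1"
    by (simp add: add_nonneg_pos)
  have "0 < (\<tau> - norm u) / (norm (x - u) + 1)"
    using assms(3) d by simp
  then obtain t where t: "0 < t" "t < 1" "t < (\<tau> - norm u) / (norm (x - u) + 1)"
    using field_lbound_gt_zero[OF zero_less_one] by blast
  \<comment> \<open>t is small enough that the step y from u towards x still satisfies the norm bound\<close>
  define y where "y = (1 - t) *\<^sub>R u + t *\<^sub>R x"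
  have "y \<in> F"
    unfolding y_def using convexD[OF assms(1,2,5)] t by simp
  have y_eq: "y = u + t *\<^sub>R (x - u)"
    by (simp add: y_def algebra_simps)
  have "t * (norm (x - u) + 1) < \<tau> - norm u"
    using t(3) d by (simp add: pos_less_divide_eq)
  moreover have "norm y \<le> norm u + t * norm (x - u)"
    using norm_triangle_ineq[of u "t *\<^sub>R (x - u)"] t(1) by (simp add: y_eq)
  ultimately have "norm y \<le> \<tau>"
    using t(1) by (simp add: distrib_left)
  then have "c \<bullet> u + t * (c \<bullet> x - c \<bullet> u) \<le> c \<bullet> u"
    using maximal[OF \<open>y \<in> F\<close>] by (simp add: y_eq inner_add_right inner_diff_right)
  then show ?thesis
    using t(1) by (simp add: mult_le_0_iff)
qed

lemma convex_feas: "convex (feas A b)"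
proof -
  have "feas A b = (\<lambda>x. A *v x) -` {..b} \<inter> {0..}"
    by (auto simp: feas_def)
  then show ?thesis
    by (simp add: convex_Int convex_linear_vimage matrix_vector_mul_linear
        is_interval_convex is_interval_ic is_interval_ci)
qed

lemma concave_on_Qval:
  assumes "convex D"
    and feasible: "\<And>x. x \<in> D \<Longrightarrow> \<exists>y. T *v x + W *v y \<le> h \<and> 0 \<le> y"
    and bounded: "\<And>x. x \<in> D \<Longrightarrow> bdd_above {q \<bullet> y | y. T *v x + W *v y \<le> h \<and> 0 \<le> y}"
  shows "concave_on D (Qval q T W h)"
  unfolding concave_on_def
proof (rule convex_onI)
  fix t :: real and x1 x2
  assume t: "0 < t" "t < 1" and x: "x1 \<in> D" "x2 \<in> D"
  define Y where "Y x = {q \<bullet> y | y. T *v x + W *v y \<le> h \<and> 0 \<le> y}" for x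
  let ?x = "(1 - t) *\<^sub>R x1 + t *\<^sub>R x2"
  have "?x \<in> D"
    using convexD_alt[OF \<open>convex D\<close> x, of t] t by (simp add: algebra_simps)
  have "(1 - t) * z1 + t * z2 \<le> Sup (Y ?x)" if z: "z1 \<in> Y x1" "z2 \<in> Y x2" for z1 z2
  proof -
    obtain y1 y2 where y1: "z1 = q \<bullet> y1" "T *v x1 + W *v y1 \<le> h" "0 \<le> y1"
      and y2: "z2 = q \<bullet> y2" "T *v x2 + W *v y2 \<le> h" "0 \<le> y2"
      using z unfolding Y_def by blast
    let ?y = "(1 - t) *\<^sub>R y1 + t *\<^sub>R y2"
    have "T *v ?x + W *v ?y = (1 - t) *\<^sub>R (T *v x1 + W *v y1) + t *\<^sub>R (T *v x2 + W *v y2)"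
      by (simp add: algebra_simps)
    also have "\<dots> \<in> {..h}"
      using y1 y2 t by (intro convexD) (auto simp: is_interval_convex is_interval_ic)
    finally have "T *v ?x + W *v ?y \<le> h"
      by simp
    moreover have "0 \<le> ?y"
      using y1 y2 t by (simp add: less_eq_vec_def)
    ultimately have "q \<bullet> ?y \<in> Y ?x"
      unfolding Y_def by blast
    then show ?thesis
      using bounded[OF \<open>?x \<in> D\<close>] y1 y2 unfolding Y_def
      by (auto simp: inner_add_right intro: cSup_upper2)
  qed
  then have "(1 - t) * Sup (Y x1) + t * Sup (Y x2) \<le> Sup (Y ?x)"
    using feasible x t by (intro cSup_weighted_add_le) (auto simp: Y_def)
  then show "- Qval q T W h ?x \<le> (1 - t) * - Qval q T W h x1 + t * - Qval q T W h x2"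
    by (simp add: Qval_def Y_def)
qed (rule \<open>convex D\<close>)

lemma concave_on_EQv:
  assumes "convex D" and "\<forall>\<xi>\<in>S. 0 \<le> P \<xi>"
    and "\<forall>\<xi>\<in>S. \<forall>x\<in>D. (\<exists>y. T \<xi> *v x + W \<xi> *v y \<le> h \<xi> \<and> 0 \<le> y) \<and>
        bdd_above {q \<xi> \<bullet> y | y. T \<xi> *v x + W \<xi> *v y \<le> h \<xi> \<and> 0 \<le> y}"
  shows "concave_on D (EQv S P q T W h)"
  unfolding EQv_def expect_def
  using assms by (intro concave_on_sum_weighted concave_on_Qval) auto

lemma linear_e1: "linear (e1 :: real \<Rightarrow> real^'n::{finite,wellorder})"
  by (rule linearI) (simp_all add: e1_def axis_def vec_eq_iff)

lemma norm_e1: "norm (e1 t :: real^'n::{finite,wellorder}) = \<bar>t\<bar>"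
  unfolding e1_def norm_eq_sqrt_inner inner_axis_axis by simp

lemma bdd_above_EQv_e1:
  fixes T :: "'s \<Rightarrow> real^'n::{finite,wellorder}^'m"
  assumes "0 \<le> R" and "\<forall>\<xi>\<in>S. 0 \<le> P \<xi>"
    and "\<forall>\<xi>\<in>S. \<forall>x. norm x \<le> R \<longrightarrow>
        (\<exists>y. T \<xi> *v x + W \<xi> *v y \<le> h \<xi> \<and> 0 \<le> y) \<and>
        bdd_above {q \<xi> \<bullet> y | y. T \<xi> *v x + W \<xi> *v y \<le> h \<xi> \<and> 0 \<le> y}"
  shows "bdd_above ((\<lambda>s. EQv S P q T W h (e1 s)) ` {0..R})"
proof -
  let ?g = "\<lambda>s. EQv S P q T W h (e1 s)"
  have "concave_on (cball 0 R) (EQv S P q T W h)"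
    using assms(2,3) by (intro concave_on_EQv) auto
  then have "concave_on {-R..R} ?g"
    by (rule concave_on_compose_linear[OF linear_e1]) (auto simp: norm_e1)
  then have "?g s \<le> 2 * ?g 0 - min (?g (-R)) (?g R)" if "s \<in> {0..R}" for s
    using concave_on_Icc_le[of "-R" R ?g s] that by simp
  then show ?thesis
    by (rule bdd_aboveI2)
qed

lemma is_opt_tau_xtau:
  assumes "\<forall>\<tau>\<ge>0. \<exists>!x. is_opt_tau c A b \<tau> x" "0 \<le> \<tau>"
  shows "is_opt_tau c A b \<tau> (xtau c A b \<tau>)"
proof -
  have "\<exists>!x. is_opt_tau c A b \<tau> x"
    using assms by blast
  then show ?thesis
    unfolding xtau_def by (rule theI')
qed

lemma xtau_eq_global_max:
  assumes "\<forall>\<tau>\<ge>0. \<exists>!x. is_opt_tau c A b \<tau> x"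
    and "xt \<in> feas A b" "\<forall>x\<in>feas A b. c \<bullet> x \<le> c \<bullet> xt" and "norm xt \<le> \<tau>"
  shows "xtau c A b \<tau> = xt"
proof -
  have "0 \<le> \<tau>"
    using assms(4) norm_ge_zero order_trans by blast
  moreover have "is_opt_tau c A b \<tau> xt"
    using assms(2-4) by (auto simp: is_opt_tau_def)
  ultimately show ?thesis
    unfolding xtau_def using assms(1) by (blast intro: the1_equality)
qed

lemma norm_xtau_below_global_max:
  assumes uniq: "\<forall>\<tau>\<ge>0. \<exists>!x. is_opt_tau c A b \<tau> x"
    and xt: "xt \<in> feas A b" "\<forall>x\<in>feas A b. c \<bullet> x \<le> c \<bullet> xt" and "0 \<le> \<tau>" "\<tau> < norm xt"
  shows "norm (xtau c A b \<tau>) = \<tau>"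
proof (rule ccontr)
  let ?u = "xtau c A b \<tau>"
  assume "norm ?u \<noteq> \<tau>"
  with is_opt_tau_xtau[OF uniq \<open>0 \<le> \<tau>\<close>]
  have u: "?u \<in> feas A b" "norm ?u < \<tau>"
    and maximal: "\<And>x. x \<in> feas A b \<Longrightarrow> norm x \<le> \<tau> \<Longrightarrow> c \<bullet> x \<le> c \<bullet> ?u"
    by (auto simp: is_opt_tau_def)
  have global: "\<forall>x\<in>feas A b. c \<bullet> x \<le> c \<bullet> ?u"
    using inner_le_if_maximal_with_slack_norm[OF convex_feas u maximal] by blast
  have "norm ?u \<le> norm xt"
    using u(2) \<open>\<tau> < norm xt\<close> by simp
  then have "xtau c A b (norm xt) = ?u"
    by (rule xtau_eq_global_max[OF uniq u(1) global])
  moreover have "xtau c A b (norm xt) = xt"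
    by (rule xtau_eq_global_max[OF uniq xt order_refl])
  ultimately show False
    using u(2) \<open>\<tau> < norm xt\<close> by simp
qed

lemma approx_mono_at_norm_xtau:
  fixes f :: "real \<Rightarrow> real"
  assumes "\<forall>\<tau>\<ge>0. \<exists>!x. is_opt_tau c A b \<tau> x"
    and "xt \<in> feas A b" "\<forall>x\<in>feas A b. c \<bullet> x \<le> c \<bullet> xt"
    and "\<forall>\<tau>1 \<tau>2. norm xt \<le> \<tau>1 \<and> \<tau>1 \<le> \<tau>2 \<and> \<tau>2 \<le> R \<longrightarrow> f \<tau>1 \<ge> f \<tau>2 - \<epsilon>"
    and "0 \<le> \<tau>" "\<tau> \<le> R" "0 \<le> \<epsilon>"
  shows "f \<tau> \<le> f (norm (xtau c A b \<tau>)) + \<epsilon>"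
proof (cases "norm xt \<le> \<tau>")
  case True
  then show ?thesis
    using xtau_eq_global_max[OF assms(1-3) True] assms(4,6) by force
next
  case False
  then show ?thesis
    using norm_xtau_below_global_max[OF assms(1-3,5)] assms(7) by simp
qed

theorem proposition1:
  fixes c :: "real^'n1::{finite,wellorder}"
    and A :: "real^'n1::{finite,wellorder}^'m1" and b :: "real^'m1"
    and S :: "'s set" and P :: "'s \<Rightarrow> real"
    and q :: "'s \<Rightarrow> real^'n2" and T :: "'s \<Rightarrow> real^'n1::{finite,wellorder}^'m2"
    and W :: "'s \<Rightarrow> real^'n2^'m2" and h :: "'s \<Rightarrow> real^'m2"
    and xt :: "real^'n1::{finite,wellorder}" and \<epsilon> :: real
  defines "R \<equiv> Sup (norm ` feas A b)"
    and "zstar \<equiv> Sup {c \<bullet> x + EQv S P q T W h x | x. x \<in> feas A b}"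
    and "zhat \<equiv> Sup {c \<bullet> xtau c A b \<tau> + EQv S P q T W h (e1 (norm (xtau c A b \<tau>))) | \<tau>. 0 \<le> \<tau> \<and> \<tau> \<le> Sup (norm ` feas A b)}"
  assumes S_fin: "finite S" and P_nonneg: "\<forall>\<xi>\<in>S. 0 \<le> P \<xi>" and P_sum: "(\<Sum>\<xi>\<in>S. P \<xi>) = 1"
    and xt_opt: "xt \<in> feas A b" "\<forall>x\<in>feas A b. c \<bullet> x \<le> c \<bullet> xt"
    and eps: "\<epsilon> > 0"
    and a_ne: "feas A b \<noteq> {}" and a_bd: "bounded (feas A b)"
    and a_uniq: "\<forall>\<tau>\<ge>0. \<exists>!x. is_opt_tau c A b \<tau> x"
    and b_feas: "\<forall>\<xi>\<in>S. \<forall>x::real^'n1::{finite,wellorder}. norm x \<le> R \<longrightarrow>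
        (\<exists>y. T \<xi> *v x + W \<xi> *v y \<le> h \<xi> \<and> 0 \<le> y) \<and>
        bdd_above {q \<xi> \<bullet> y | y. T \<xi> *v x + W \<xi> *v y \<le> h \<xi> \<and> 0 \<le> y}"
    and c_rot: "\<forall>x::real^'n1::{finite,wellorder}. norm x \<le> R \<longrightarrow> \<bar>EQv S P q T W h x - EQv S P q T W h (e1 (norm x))\<bar> \<le> \<epsilon>"
    and d_mono: "\<forall>\<tau>1 \<tau>2. norm xt \<le> \<tau>1 \<and> \<tau>1 \<le> \<tau>2 \<and> \<tau>2 \<le> R \<longrightarrow>
        EQv S P q T W h (e1 \<tau>1) \<ge> EQv S P q T W h (e1 \<tau>2) - \<epsilon>"
  shows "\<bar>zstar - zhat\<bar> \<le> 2 * \<epsilon>"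
proof -
  let ?F = "feas A b" and ?E = "EQv S P q T W h"
  let ?Z = "{c \<bullet> x + ?E x | x. x \<in> ?F}"
  let ?H = "{c \<bullet> xtau c A b \<tau> + ?E (e1 (norm (xtau c A b \<tau>))) | \<tau>. 0 \<le> \<tau> \<and> \<tau> \<le> R}"
  have norm_le_R: "norm x \<le> R" if "x \<in> ?F" for x
    unfolding R_def using a_bd that by (intro cSup_upper) (auto simp: bdd_above_norm)
  have "0 \<le> R"
    using a_ne norm_le_R norm_ge_zero order_trans by blast
  have rot: "?E x \<le> ?E (e1 (norm x)) + \<epsilon>" "?E (e1 (norm x)) \<le> ?E x + \<epsilon>" if "x \<in> ?F" for x
    using c_rot norm_le_R[OF that] by (auto simp: abs_le_iff)
  obtain K where K: "\<And>s. s \<in> {0..R} \<Longrightarrow> ?E (e1 s) \<le> K"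
    using bdd_above_EQv_e1[OF \<open>0 \<le> R\<close> P_nonneg b_feas] unfolding bdd_above_def by blast
  have Z_bdd: "bdd_above ?Z"
  proof (rule bdd_aboveI)
    fix z
    assume "z \<in> ?Z"
    then obtain x where x: "x \<in> ?F" "z = c \<bullet> x + ?E x"
      by blast
    have "c \<bullet> x \<le> norm c * R"
      using norm_cauchy_schwarz[of c x] mult_left_mono[OF norm_le_R[OF x(1)], of "norm c"] by simp
    then show "z \<le> norm c * R + (K + \<epsilon>)"
      using x rot(1)[OF x(1)] K[of "norm x"] norm_le_R[OF x(1)] by simp
  qed
  have H_le_Z: "\<exists>z'\<in>?Z. z \<le> z' + \<epsilon>" if "z \<in> ?H" for z
    using that rot(2) is_opt_tau_xtau[OF a_uniq] by (fastforce simp: is_opt_tau_def)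
  have Z_le_H: "\<exists>z'\<in>?H. z \<le> z' + 2 * \<epsilon>" if z: "z \<in> ?Z" for z
  proof -
    obtain x where x: "x \<in> ?F" "z = c \<bullet> x + ?E x"
      using z by blast
    let ?u = "xtau c A b (norm x)"
    have "c \<bullet> x \<le> c \<bullet> ?u"
      using is_opt_tau_xtau[OF a_uniq, of "norm x"] x(1) by (auto simp: is_opt_tau_def)
    moreover have "?E (e1 (norm x)) \<le> ?E (e1 (norm ?u)) + \<epsilon>"
      using approx_mono_at_norm_xtau[OF a_uniq xt_opt d_mono] norm_le_R[OF x(1)] eps by simp
    moreover have "c \<bullet> ?u + ?E (e1 (norm ?u)) \<in> ?H"
      using norm_le_R[OF x(1)] by auto
    ultimately show ?thesis
      using rot(1)[OF x(1)] x(2) by (intro bexI[of _ "c \<bullet> ?u + ?E (e1 (norm ?u))"]) auto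
  qed
  have "?Z \<noteq> {}" "?H \<noteq> {}"
    using a_ne \<open>0 \<le> R\<close> by auto
  then show ?thesis
    unfolding zstar_def zhat_def R_def[symmetric]
    using abs_cSup_diff_le[OF _ _ Z_bdd _ _ H_le_Z Z_le_H] eps by simp
qed

end
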